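(* For every $\alpha\in[0,1)$ and every integer $n\ge2$, the kernel $K_\alpha(x,y)=\dfrac{1}{x^2+2\cos(\pi\alpha)xy+y^2}$ on $(0,+\infty)^2$ satisfies $K_\alpha\in\mathrm{TP}_n\iff K_\alpha\in\mathrm{SR}_n$.
   Context: A kernel $K$ on $I\times I$ is $\mathrm{TP}_n$ if $\det[K(x_i,y_j)]_{1\le i,j\le m}\ge0$ for every $m\in\{1,\ldots,n\}$ and all $x_1<\cdots<x_m$, $y_1<\cdots<y_m$ in $I$; it is $\mathrm{SR}_n$ if there exist $\varepsilon_1,\ldots,\varepsilon_n\in\{-1,1\}$ with $\varepsilon_m\det[K(x_i,y_j)]_{1\le i,j\le m}\ge0$ for all such $m$ and points. *)

theory Defs
  imports Complex_Main "Jordan_Normal_Form.Determinant"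
begin

definition kmat :: "(real \<Rightarrow> real \<Rightarrow> real) \<Rightarrow> nat \<Rightarrow> (nat \<Rightarrow> real) \<Rightarrow> (nat \<Rightarrow> real) \<Rightarrow> real mat" where
  "kmat K m x y = mat m m (\<lambda>(i,j). K (x i) (y j))"

definition incr_pts :: "real set \<Rightarrow> nat \<Rightarrow> (nat \<Rightarrow> real) \<Rightarrow> bool" where
  "incr_pts I m x \<longleftrightarrow> (\<forall>i<m. x i \<in> I) \<and> (\<forall>i j. i < j \<and> j < m \<longrightarrow> x i < x j)"

definition TP :: "nat \<Rightarrow> real set \<Rightarrow> (real \<Rightarrow> real \<Rightarrow> real) \<Rightarrow> bool" where
  "TP n I K \<longleftrightarrow> (\<forall>m x y. 1 \<le> m \<and> m \<le> n \<and> incr_pts I m x \<and> incr_pts I m y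
      \<longrightarrow> det (kmat K m x y) \<ge> 0)"

definition SR :: "nat \<Rightarrow> real set \<Rightarrow> (real \<Rightarrow> real \<Rightarrow> real) \<Rightarrow> bool" where
  "SR n I K \<longleftrightarrow> (\<exists>\<epsilon> :: nat \<Rightarrow> real. (\<forall>m. 1 \<le> m \<and> m \<le> n \<longrightarrow> \<epsilon> m \<in> {-1, 1}) \<and>
      (\<forall>m x y. 1 \<le> m \<and> m \<le> n \<and> incr_pts I m x \<and> incr_pts I m y
      \<longrightarrow> \<epsilon> m * det (kmat K m x y) \<ge> 0))"

definition K_alpha :: "real \<Rightarrow> real \<Rightarrow> real \<Rightarrow> real" where
  "K_alpha \<alpha> x y = 1 / (x\<^sup>2 + 2 * cos (pi * \<alpha>) * x * y + y\<^sup>2)"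

end

theory Submission
  imports Defs
begin

text \<open>
  A kernel that is \<open>SR\<^sub>n\<close> is \<open>TP\<^sub>n\<close> as soon as every order \<open>m \<le> n\<close> admits one
  strictly positive minor, since that minor fixes the sign \<open>\<epsilon>\<^sub>m = 1\<close>. For
  \<open>K(x,y) = 1/(x\<^sup>2 + 2cxy + y\<^sup>2)\<close> with \<open>c = cos(\<pi>\<alpha>) > -1\<close> take the geometric points
  \<open>x\<^sub>i = y\<^sub>i = t\<^sup>i\<close>: after scaling row \<open>i\<close> and column \<open>j\<close> by \<open>t\<^sup>i\<close> and \<open>t\<^sup>j\<close>, the entry
  depends only on \<open>t\<^sup>i/t\<^sup>j\<close> and tends to \<open>\<delta>\<^sub>i\<^sub>j/(2 + 2c)\<close> as \<open>t \<rightarrow> \<infinity>\<close>, so the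
  minor is eventually positive.
\<close>

lemma TP_imp_SR: "TP n I K \<Longrightarrow> SR n I K"
  unfolding TP_def SR_def by (intro exI[of _ "\<lambda>_. 1"]) auto

lemma SR_imp_TP_if_positive_minors:
  assumes SR: "SR n I K"
    and pos: "\<And>m. 1 \<le> m \<Longrightarrow> m \<le> n \<Longrightarrow>
      \<exists>x y. incr_pts I m x \<and> incr_pts I m y \<and> det (kmat K m x y) > 0"
  shows "TP n I K"
proof -
  obtain \<epsilon> :: "nat \<Rightarrow> real" where
    \<epsilon>_sign: "\<And>m. 1 \<le> m \<Longrightarrow> m \<le> n \<Longrightarrow> \<epsilon> m \<in> {-1, 1}" and
    \<epsilon>_det: "\<And>m x y. 1 \<le> m \<Longrightarrow> m \<le> n \<Longrightarrow> incr_pts I m x \<Longrightarrow> incr_pts I m y \<Longrightarrow>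
      \<epsilon> m * det (kmat K m x y) \<ge> 0"
    using SR unfolding SR_def by blast
  have "\<epsilon> m = 1" if m: "1 \<le> m" "m \<le> n" for m
  proof -
    obtain x y where "incr_pts I m x" "incr_pts I m y" "det (kmat K m x y) > 0"
      using pos[OF m] by blast
    with \<epsilon>_det[OF m] have "\<epsilon> m \<ge> 0"
      by (meson less_le_not_le zero_le_mult_iff)
    with \<epsilon>_sign[OF m] show ?thesis by auto
  qed
  with \<epsilon>_det show ?thesis unfolding TP_def by fastforce
qed

lemma tendsto_det_mat:
  fixes f :: "'a \<Rightarrow> nat \<Rightarrow> nat \<Rightarrow> real"
  assumes "\<And>i j. i < m \<Longrightarrow> j < m \<Longrightarrow> ((\<lambda>t. f t i j) \<longlongrightarrow> g i j) F"
  shows "((\<lambda>t. det (mat m m (\<lambda>(i, j). f t i j))) \<longlongrightarrow> det (mat m m (\<lambda>(i, j). g i j))) F"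
proof -
  have "((\<lambda>t. \<Sum>p | p permutes {0..<m}. signof p * (\<Prod>i = 0..<m. f t i (p i))) \<longlongrightarrow>
      (\<Sum>p | p permutes {0..<m}. signof p * (\<Prod>i = 0..<m. g i (p i)))) F"
    by (intro tendsto_intros assms) (auto dest: permutes_in_image)
  then show ?thesis
    by (subst (1 2) det_def'[of _ m]) (auto intro!: sum.cong prod.cong dest: permutes_in_image)
qed

lemma det_mat_scaled:
  fixes r s :: "nat \<Rightarrow> real"
  shows "det (mat m m (\<lambda>(i, j). r i * s j * a i j)) =
    (\<Prod>i = 0..<m. r i) * (\<Prod>j = 0..<m. s j) * det (mat m m (\<lambda>(i, j). a i j))"
proof -
  have "signof p * (\<Prod>i = 0..<m. r i * s (p i) * a i (p i)) =
      (\<Prod>i = 0..<m. r i) * (\<Prod>j = 0..<m. s j) * (signof p * (\<Prod>i = 0..<m. a i (p i)))"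
    if "p permutes {0..<m}" for p
  proof -
    have "(\<Prod>i = 0..<m. s (p i)) = (\<Prod>j = 0..<m. s j)"
      using prod.permute[OF that, of s] by (simp add: comp_def)
    then show ?thesis by (simp add: prod.distrib)
  qed
  then show ?thesis
    by (subst (1 2) det_def'[of _ m])
      (auto simp: sum_distrib_left intro!: sum.cong prod.cong dest: permutes_in_image)
qed

lemma scaled_kernel_eq_ratio:
  fixes c u v :: real
  assumes "v > 0"
  shows "u * v / (u\<^sup>2 + 2 * c * u * v + v\<^sup>2) = (u / v) / ((u / v)\<^sup>2 + 2 * c * (u / v) + 1)"
proof -
  have "u\<^sup>2 + 2 * c * u * v + v\<^sup>2 = v\<^sup>2 * ((u / v)\<^sup>2 + 2 * c * (u / v) + 1)"
    using assms by (simp add: field_simps power2_eq_square)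
  then show ?thesis using assms by (simp add: power2_eq_square)
qed

lemma tendsto_scaled_kernel_geometric:
  fixes c :: real
  shows "((\<lambda>t::real. t ^ i * t ^ j / ((t ^ i)\<^sup>2 + 2 * c * t ^ i * t ^ j + (t ^ j)\<^sup>2))
    \<longlongrightarrow> (if i = j then 1 / (2 + 2 * c) else 0)) at_top"
proof -
  define h where "h r = r / (r\<^sup>2 + 2 * c * r + 1)" for r :: real
  have h_ratio: "\<forall>\<^sub>F t in at_top. (t::real) ^ i * t ^ j / ((t ^ i)\<^sup>2 + 2 * c * t ^ i * t ^ j + (t ^ j)\<^sup>2)
      = h (t ^ i / t ^ j)" for i j :: nat
    using eventually_gt_at_top[of "0::real"]
    by eventually_elim (simp add: h_def scaled_kernel_eq_ratio)
  have off_diagonal: "((\<lambda>t::real. t ^ i * t ^ j / ((t ^ i)\<^sup>2 + 2 * c * t ^ i * t ^ j + (t ^ j)\<^sup>2))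
      \<longlongrightarrow> 0) at_top" if ij: "i < j" for i j :: nat
  proof -
    have "\<forall>\<^sub>F t in at_top. t ^ i / t ^ j = inverse ((t::real) ^ (j - i))"
      using eventually_gt_at_top[of "0::real"]
      by eventually_elim (use ij in \<open>simp add: power_diff field_simps\<close>)
    moreover have "((\<lambda>t::real. inverse (t ^ (j - i))) \<longlongrightarrow> 0) at_top"
      using ij by (intro tendsto_inverse_0_at_top filterlim_pow_at_top filterlim_ident) auto
    ultimately have "((\<lambda>t::real. t ^ i / t ^ j) \<longlongrightarrow> 0) at_top"
      by (simp add: tendsto_cong)
    then have "((\<lambda>t. h (t ^ i / t ^ j)) \<longlongrightarrow> h 0) at_top"
      unfolding h_def by (intro tendsto_intros) auto
    then show ?thesis
      using h_ratio[of i j] by (simp add: h_def tendsto_cong)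
  qed
  consider "i = j" | "i < j" | "j < i" by linarith
  then show ?thesis
  proof cases
    case 1
    have "h 1 = 1 / (2 + 2 * c)" by (simp add: h_def)
    moreover have "\<forall>\<^sub>F t in at_top. h (t ^ i / t ^ i) = h 1"
      using eventually_gt_at_top[of "0::real"] by eventually_elim simp
    ultimately show ?thesis
      using 1 h_ratio[of i i] by (simp add: tendsto_cong)
  next
    case 3
    then show ?thesis
      using off_diagonal[OF 3] by (simp add: ac_simps)
  qed (use off_diagonal in simp)
qed

lemma det_kernel_geometric_eventually_pos:
  fixes c :: real
  assumes c: "c > -1"
  defines "K \<equiv> \<lambda>x y. 1 / (x\<^sup>2 + 2 * c * x * y + y\<^sup>2)"
  shows "\<forall>\<^sub>F t in at_top. det (kmat K m (\<lambda>i. t ^ i) (\<lambda>i. t ^ i)) > 0"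
proof -
  define a where "a = 1 / (2 + 2 * c)"
  have "a > 0" using c by (simp add: a_def)
  have "((\<lambda>t::real. t ^ i * t ^ j * K (t ^ i) (t ^ j)) \<longlongrightarrow> (if i = j then a else 0)) at_top"
    for i j
    using tendsto_scaled_kernel_geometric[of i j c]
    unfolding K_def a_def by (simp only: times_divide_eq_right mult_1_right)
  then have "((\<lambda>t::real. det (mat m m (\<lambda>(i, j). t ^ i * t ^ j * K (t ^ i) (t ^ j))))
      \<longlongrightarrow> det (mat m m (\<lambda>(i, j). if i = j then a else 0))) at_top"
    by (intro tendsto_det_mat)
  also have "mat m m (\<lambda>(i, j). if i = j then a else 0) = a \<cdot>\<^sub>m 1\<^sub>m m"
    by (rule eq_matI) auto
  finally have "((\<lambda>t::real. det (mat m m (\<lambda>(i, j). t ^ i * t ^ j * K (t ^ i) (t ^ j))))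
      \<longlongrightarrow> a ^ m) at_top"
    by simp
  with \<open>a > 0\<close> have "\<forall>\<^sub>F t in at_top. det (mat m m (\<lambda>(i, j). t ^ i * t ^ j * K (t ^ i) (t ^ j))) > 0"
    by (simp add: order_tendstoD(1))
  then show ?thesis
    using eventually_gt_at_top[of "0::real"]
  proof eventually_elim
    case (elim t)
    have "det (mat m m (\<lambda>(i, j). t ^ i * t ^ j * K (t ^ i) (t ^ j))) =
        (\<Prod>i = 0..<m. t ^ i)\<^sup>2 * det (kmat K m (\<lambda>i. t ^ i) (\<lambda>i. t ^ i))"
      using det_mat_scaled[of m "\<lambda>i. t ^ i" "\<lambda>j. t ^ j" "\<lambda>i j. K (t ^ i) (t ^ j)"]
      by (simp add: kmat_def power2_eq_square)
    with elim show ?case by (simp add: zero_less_mult_iff)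
  qed
qed

lemma incr_pts_geometric: "t > 1 \<Longrightarrow> incr_pts {0<..} m (\<lambda>i. t ^ i)"
  unfolding incr_pts_def by (auto intro: power_strict_increasing)

theorem corollary1:
  fixes \<alpha> :: real and n :: nat
  assumes "0 \<le> \<alpha>" and "\<alpha> < 1" and "2 \<le> n"
  shows "TP n {0<..} (K_alpha \<alpha>) \<longleftrightarrow> SR n {0<..} (K_alpha \<alpha>)"
proof
  show "SR n {0<..} (K_alpha \<alpha>)" if "TP n {0<..} (K_alpha \<alpha>)"
    using that by (rule TP_imp_SR)
next
  have "cos pi < cos (pi * \<alpha>)"
    by (rule cos_monotone_0_pi) (use assms in auto)
  then have c: "cos (pi * \<alpha>) > -1" by simp
  have positive_minor: "\<exists>x y. incr_pts {0<..} m x \<and> incr_pts {0<..} m y \<and>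
      det (kmat (K_alpha \<alpha>) m x y) > 0" for m
  proof -
    obtain t where "t > 1" "det (kmat (K_alpha \<alpha>) m (\<lambda>i. t ^ i) (\<lambda>i. t ^ i)) > 0"
      using eventually_conj[OF eventually_gt_at_top det_kernel_geometric_eventually_pos[OF c]]
      unfolding K_alpha_def[abs_def] eventually_at_top_linorder by blast
    with incr_pts_geometric show ?thesis by blast
  qed
  show "TP n {0<..} (K_alpha \<alpha>)" if "SR n {0<..} (K_alpha \<alpha>)"
    using that positive_minor by (rule SR_imp_TP_if_positive_minors)
qed

end
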